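(* Let $d\ge3$, $h\ge1$, and let $\ell$ be a leaf (a vertex at distance $h$ from the root). Then the order of $\bar{\mathbf{x}}_\ell$ in $G(d,h)$ divides $$(d-1)^h\cdot\operatorname{lcm}\{d\,\theta(d,h+1),\theta(d,h),\theta(d,h-1),\dots,\theta(d,2)\},$$ where $\theta(d,m):=\frac{(d-1)^m-1}{d-2}$.
   Context: Let $\mathcal{T}(d,h)$ be the rooted tree in which the root $0$ has $d$ children, every vertex at distance $1,\dots,h-1$ from the root has $d-1$ children, and the vertices at distance $h$ are leaves. Let $V$ be its vertex set, $A$ its adjacency matrix, $\Delta := dI-A$, and $\Lambda\subset\mathbb{Z}^V$ the lattice spanned by the rows of $\Delta$. Then $G(d,h):=\mathbb{Z}^V/\Lambda$; $\{\mathbf{x}_i:i\in V\}$ is the standard basis of $\mathbb{Z}^V$ and $\bar{\mathbf{v}}$ denotes the image of $\mathbf{v}$ in $G(d,h)$. *)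

theory Defs
  imports Main
begin

text \<open>Vertices of the tree T(d,h) are encoded as paths from the root:
  the root is [], a vertex at distance k is a list of length k whose first entry
  (the choice of child of the root) is < d and whose later entries are < d-1.
  The children of a vertex v are the lists v @ [i].\<close>

definition tree_vertices :: "nat \<Rightarrow> nat \<Rightarrow> nat list set" where
  "tree_vertices d h = {xs. length xs \<le> h \<and> (xs \<noteq> [] \<longrightarrow> hd xs < d) \<and>
                            (\<forall>i \<in> set (tl xs). i < d - 1)}"

definition tree_adj :: "nat \<Rightarrow> nat \<Rightarrow> nat list \<Rightarrow> nat list \<Rightarrow> bool" where
  "tree_adj d h u v \<longleftrightarrow> u \<in> tree_vertices d h \<and> v \<in> tree_vertices d h \<and>
                         (\<exists>i. v = u @ [i] \<or> u = v @ [i])"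

definition tree_Delta :: "nat \<Rightarrow> nat \<Rightarrow> nat list \<Rightarrow> nat list \<Rightarrow> int" where
  "tree_Delta d h u v = (if u = v then int d else 0) - (if tree_adj d h u v then 1 else 0)"

text \<open>The lattice Lambda in Z^V spanned by the rows of Delta (vectors in Z^V are
  functions on vertices; only their values on V matter since all rows vanish off V).\<close>
definition tree_lattice :: "nat \<Rightarrow> nat \<Rightarrow> (nat list \<Rightarrow> int) set" where
  "tree_lattice d h = {w. \<exists>c :: nat list \<Rightarrow> int.
      w = (\<lambda>v. \<Sum>u\<in>tree_vertices d h. c u * tree_Delta d h u v)}"

definition basis_vec :: "nat list \<Rightarrow> nat list \<Rightarrow> int" where
  "basis_vec i = (\<lambda>j. if j = i then 1 else 0)"

definition G_order :: "nat \<Rightarrow> nat \<Rightarrow> (nat list \<Rightarrow> int) \<Rightarrow> nat" where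
  "G_order d h w = (if \<exists>n>0. (\<lambda>v. int n * w v) \<in> tree_lattice d h
      then (LEAST n. n > 0 \<and> (\<lambda>v. int n * w v) \<in> tree_lattice d h) else 0)"

text \<open>theta(d,m) = ((d-1)^m - 1)/(d-2); the division is exact for d \<ge> 3.\<close>
definition theta :: "nat \<Rightarrow> nat \<Rightarrow> nat" where
  "theta d m = ((d - 1) ^ m - 1) div (d - 2)"

end

theory Submission
  imports Defs "HOL-Library.Sublist"
begin

text \<open>
  We write n x_l as an integer combination of the rows of Delta. Put f(w) = theta(h + 1 - |w|).
  The recurrence theta(m + 2) = d theta(m + 1) - (d - 1) theta(m) together with theta(0) = 0 makes
  f harmonic (Delta f = 0) at every vertex except the root, where Delta f = d (d - 1)^h.
  Multiply f by a step function g(j), where j is the depth at which w leaves the path from the root to l.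
  The jumps g(j + 1) - g(j) = n / (theta(h + 1 - j) theta(h - j)) and the value
  g(0) = n / (d (d - 1)^h theta(h + 1)) cancel the defects at the root and along the path,
  and leave exactly n at l. For n = (d - 1)^h L all these quotients are integers,
  because theta(m + 1) and theta(m) are coprime and both divide L.
\<close>

section \<open>The numbers theta\<close>

lemma theta_eq_sum:
  assumes "d \<ge> 3"
  shows "theta d m = (\<Sum>i<m. (d - 1) ^ i)"
proof -
  have "int ((d - 1) ^ m - 1) = int ((d - 2) * (\<Sum>i<m. (d - 1) ^ i))"
    using power_diff_1_eq[of "int d - 1" m] assms
    by (simp add: of_nat_diff)
  then have "(d - 1) ^ m - 1 = (d - 2) * (\<Sum>i<m. (d - 1) ^ i)"
    by (simp only: of_nat_eq_iff)
  then show ?thesis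
    using assms by (simp add: theta_def)
qed

lemma theta_Suc_eq_add_power:
  assumes "d \<ge> 3"
  shows "theta d (Suc m) = theta d m + (d - 1) ^ m"
  using assms by (simp add: theta_eq_sum)

lemma theta_Suc:
  assumes "d \<ge> 3"
  shows "theta d (Suc m) = (d - 1) * theta d m + 1"
  unfolding theta_eq_sum[OF assms] by (subst sum.lessThan_Suc_shift) (simp add: sum_distrib_left)

lemma theta_Suc_int:
  assumes "d \<ge> 3"
  shows "int (theta d (Suc m)) = (int d - 1) * int (theta d m) + 1"
  using assms by (simp add: theta_Suc of_nat_diff)

lemma theta_0: "theta d 0 = 0"
  by (simp add: theta_def)

lemma theta_1: "d \<ge> 3 \<Longrightarrow> theta d (Suc 0) = 1"
  by (simp add: theta_eq_sum)

lemma theta_2: "d \<ge> 3 \<Longrightarrow> theta d (Suc (Suc 0)) = d"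
  by (simp add: theta_eq_sum)

lemma theta_pos: "d \<ge> 3 \<Longrightarrow> m \<ge> 1 \<Longrightarrow> theta d m > 0"
  by (cases m) (simp_all add: theta_Suc)

lemma coprime_theta_Suc:
  assumes "d \<ge> 3"
  shows "coprime (theta d (Suc m)) (theta d m)"
proof -
  have "gcd (theta d m) ((d - 1) * theta d m + 1) = gcd (theta d m) 1"
    by (rule gcd_add_mult)
  then show ?thesis
    by (simp add: theta_Suc[OF assms] coprime_iff_gcd_eq_1 gcd.commute)
qed

lemma theta_Suc_Suc:
  assumes "d \<ge> 3"
  shows "int (theta d (Suc (Suc m))) = int d * int (theta d (Suc m)) - (int d - 1) * int (theta d m)"
  unfolding theta_Suc_int[OF assms] by (simp add: algebra_simps)

section \<open>Neighbourhoods in the tree\<close>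

definition num_children :: "nat \<Rightarrow> nat \<Rightarrow> nat list \<Rightarrow> nat" where
  "num_children d h v = (if length v < h then if v = [] then d else d - 1 else 0)"

lemma tree_vertices_finite: "finite (tree_vertices d h)"
proof -
  have "set v \<subseteq> {..<d}" if "v \<in> tree_vertices d h" for v
    using that by (cases v) (auto simp: tree_vertices_def)
  then have "tree_vertices d h \<subseteq> {xs. set xs \<subseteq> {..<d} \<and> length xs \<le> h}"
    by (auto simp: tree_vertices_def)
  then show ?thesis
    using finite_lists_length_le[of "{..<d}" h] finite_subset by blast
qed

lemma snoc_in_tree_vertices_iff:
  "v \<in> tree_vertices d h \<Longrightarrow> v @ [i] \<in> tree_vertices d h \<longleftrightarrow> i < num_children d h v"
  unfolding tree_vertices_def num_children_def by (cases v) auto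

lemma butlast_in_tree_vertices:
  "v \<in> tree_vertices d h \<Longrightarrow> butlast v \<in> tree_vertices d h"
  unfolding tree_vertices_def by (cases v) (auto dest: in_set_butlastD)

lemma prefix_in_tree_vertices:
  "prefix v l \<Longrightarrow> l \<in> tree_vertices d h \<Longrightarrow> v \<in> tree_vertices d h"
  by (cases v) (auto simp: tree_vertices_def prefix_def)

lemma tree_neighbours:
  assumes v: "v \<in> tree_vertices d h"
  shows "{u \<in> tree_vertices d h. tree_adj d h u v} =
    (if v = [] then {} else {butlast v}) \<union> (\<lambda>i. v @ [i]) ` {..<num_children d h v}"
proof (intro set_eqI iffI)
  fix u
  assume "u \<in> {u \<in> tree_vertices d h. tree_adj d h u v}"
  then obtain i where "u \<in> tree_vertices d h" "v = u @ [i] \<or> u = v @ [i]"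
    unfolding tree_adj_def by blast
  then show "u \<in> (if v = [] then {} else {butlast v}) \<union> (\<lambda>i. v @ [i]) ` {..<num_children d h v}"
    using snoc_in_tree_vertices_iff[OF v] by auto
next
  fix u
  assume "u \<in> (if v = [] then {} else {butlast v}) \<union> (\<lambda>i. v @ [i]) ` {..<num_children d h v}"
  then consider "v \<noteq> []" "u = butlast v" | i where "i < num_children d h v" "u = v @ [i]"
    by (auto split: if_splits)
  then show "u \<in> {u \<in> tree_vertices d h. tree_adj d h u v}"
  proof cases
    case 1
    then have "v = u @ [last v]" by simp
    then show ?thesis
      using v butlast_in_tree_vertices[OF v] 1 unfolding tree_adj_def by blast
  next
    case 2
    then show ?thesis
      using v snoc_in_tree_vertices_iff[OF v] unfolding tree_adj_def by blast
  qed
qed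

definition tree_laplacian :: "nat \<Rightarrow> nat \<Rightarrow> (nat list \<Rightarrow> int) \<Rightarrow> nat list \<Rightarrow> int" where
  "tree_laplacian d h c v =
    int d * c v - (if v = [] then 0 else c (butlast v)) - (\<Sum>i<num_children d h v. c (v @ [i]))"

lemma sum_tree_Delta:
  assumes v: "v \<in> tree_vertices d h"
  shows "(\<Sum>u\<in>tree_vertices d h. c u * tree_Delta d h u v) = tree_laplacian d h c v"
proof -
  let ?V = "tree_vertices d h"
  have "c u * tree_Delta d h u v =
      (if u = v then int d * c u else 0) - (if tree_adj d h u v then c u else 0)" for u
    unfolding tree_Delta_def by (simp add: algebra_simps)
  then have "(\<Sum>u\<in>?V. c u * tree_Delta d h u v) =
      (\<Sum>u\<in>?V. if u = v then int d * c u else 0) - (\<Sum>u\<in>?V. if tree_adj d h u v then c u else 0)"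
    by (simp add: sum_subtractf)
  also have "(\<Sum>u\<in>?V. if u = v then int d * c u else 0) = int d * c v"
    using tree_vertices_finite v by (simp add: sum.delta')
  also have "(\<Sum>u\<in>?V. if tree_adj d h u v then c u else 0) = (\<Sum>u\<in>{u\<in>?V. tree_adj d h u v}. c u)"
    using tree_vertices_finite by (simp add: sum.inter_filter)
  also have "\<dots> = (\<Sum>u\<in>(if v = [] then {} else {butlast v}). c u)
                  + (\<Sum>u\<in>(\<lambda>i. v @ [i]) ` {..<num_children d h v}. c u)"
    unfolding tree_neighbours[OF v]
    by (rule sum.union_disjoint) (auto dest: arg_cong[where f = length])
  also have "(\<Sum>u\<in>(\<lambda>i. v @ [i]) ` {..<num_children d h v}. c u) = (\<Sum>i<num_children d h v. c (v @ [i]))"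
    by (subst sum.reindex) (auto simp: inj_on_def)
  finally show ?thesis
    by (simp add: tree_laplacian_def)
qed

section \<open>The lattice and the order of an element\<close>

lemma tree_lattice_diff_smult:
  assumes "a \<in> tree_lattice d h" "b \<in> tree_lattice d h"
  shows "(\<lambda>v. a v - q * b v) \<in> tree_lattice d h"
proof -
  obtain ca cb where
    "a = (\<lambda>v. \<Sum>u\<in>tree_vertices d h. ca u * tree_Delta d h u v)"
    "b = (\<lambda>v. \<Sum>u\<in>tree_vertices d h. cb u * tree_Delta d h u v)"
    using assms unfolding tree_lattice_def by blast
  then have "(\<lambda>v. a v - q * b v) =
      (\<lambda>v. \<Sum>u\<in>tree_vertices d h. (ca u - q * cb u) * tree_Delta d h u v)"
    by (simp add: sum_subtractf sum_distrib_left algebra_simps)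
  then show ?thesis
    unfolding tree_lattice_def by (intro CollectI exI)
qed

lemma G_order_dvd:
  assumes "n > 0" and n_mem: "(\<lambda>v. int n * w v) \<in> tree_lattice d h"
  shows "G_order d h w dvd n"
proof -
  define P where "P n \<longleftrightarrow> n > 0 \<and> (\<lambda>v. int n * w v) \<in> tree_lattice d h" for n
  define n0 where "n0 = (LEAST n. P n)"
  have "P n"
    using assms unfolding P_def by blast
  then have P_n0: "P n0"
    unfolding n0_def by (rule LeastI)
  have G: "G_order d h w = n0"
    using assms unfolding G_order_def n0_def P_def by (intro if_P) blast
  have "(\<lambda>v. int n * w v - int (n div n0) * (int n0 * w v)) \<in> tree_lattice d h"
    using tree_lattice_diff_smult n_mem P_n0 unfolding P_def by blast
  moreover have "int n = int (n div n0) * int n0 + int (n mod n0)"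
    by (metis div_mult_mod_eq of_nat_add of_nat_mult)
  ultimately have "(\<lambda>v. int (n mod n0) * w v) \<in> tree_lattice d h"
    by (simp add: algebra_simps)
  moreover have "\<not> P (n mod n0)"
    using P_n0 not_less_Least[of "n mod n0" P] unfolding n0_def P_def by simp
  ultimately have "n mod n0 = 0"
    unfolding P_def by simp
  then show ?thesis
    unfolding G by (simp add: dvd_eq_mod_eq_0)
qed

section \<open>A potential for a multiple of a leaf\<close>

lemma prefix_snoc_iff_nth:
  "prefix (v @ [i]) l \<longleftrightarrow> prefix v l \<and> length v < length l \<and> l ! length v = i"
proof (induction v arbitrary: l)
  case Nil
  then show ?case by (cases l) auto
next
  case (Cons a v)
  then show ?case by (cases l) auto
qed

lemma length_longest_common_prefix_snoc:
  "length (longest_common_prefix (v @ [i]) l) =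
    (if prefix (v @ [i]) l then Suc (length v) else length (longest_common_prefix v l))"
proof (induction v arbitrary: l)
  case Nil
  then show ?case by (cases l) auto
next
  case (Cons a v)
  then show ?case by (cases l) auto
qed

lemma longest_common_prefix_prefix_eq: "prefix v l \<Longrightarrow> longest_common_prefix v l = v"
  by (metis longest_common_prefix_max_prefix longest_common_prefix_prefix1 prefix_order.antisym
      prefix_order.refl)

lemma length_longest_common_prefix_butlast:
  assumes "\<not> prefix v l"
  shows "length (longest_common_prefix (butlast v) l) = length (longest_common_prefix v l)"
proof -
  have "v \<noteq> []"
    using assms by auto
  then have "v = butlast v @ [last v]"
    by simp
  then show ?thesis
    using assms length_longest_common_prefix_snoc[of "butlast v" "last v" l] by metis
qed

lemma sum_if_eq_lessThan:
  fixes x y :: int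
  assumes "a < n"
  shows "(\<Sum>i<n. if i = a then x else y) = x + (int n - 1) * y"
proof -
  have "(\<Sum>i<n. if i = a then x else y) = (\<Sum>i<n. y + (if i = a then x - y else 0))"
    by (rule sum.cong) auto
  also have "\<dots> = int n * y + (x - y)"
    using assms by (simp add: sum.distrib)
  finally show ?thesis
    by (simp add: algebra_simps)
qed

locale leaf_potential =
  fixes d h :: nat and l :: "nat list" and N :: int and g :: "nat \<Rightarrow> int"
  assumes d: "d \<ge> 3" and h: "h \<ge> 1"
    and l: "l \<in> tree_vertices d h" "length l = h"
    and g_0: "int (d * (d - 1) ^ h * theta d (Suc h)) * g 0 = N"
    and g_Suc: "\<And>j. j < h \<Longrightarrow> int (theta d (Suc (h - j)) * theta d (h - j)) * (g (Suc j) - g j) = N"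
begin

definition potential :: "nat list \<Rightarrow> int" where
  "potential w = g (length (longest_common_prefix w l)) * int (theta d (Suc h - length w))"

lemma sum_potential_children:
  "(\<Sum>i<n. potential (v @ [i])) =
    (\<Sum>i<n. g (if prefix (v @ [i]) l then Suc (length v) else length (longest_common_prefix v l)))
      * int (theta d (h - length v))"
  unfolding potential_def length_longest_common_prefix_snoc
  by (simp add: sum_distrib_right if_distrib)

lemma num_children_mult_theta:
  assumes "v \<noteq> []" "length v \<le> h"
  shows "int (num_children d h v) * int (theta d (h - length v)) =
    (int d - 1) * int (theta d (h - length v))"
proof (cases "length v < h")
  case True
  then show ?thesis
    using assms d by (simp add: num_children_def of_nat_diff)
next
  case False
  then show ?thesis
    using assms by (simp add: theta_0)
qed

lemma tree_laplacian_potential_off_path: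
  assumes v: "v \<in> tree_vertices d h" and off: "\<not> prefix v l"
  shows "tree_laplacian d h potential v = 0"
proof -
  define k where "k = length v"
  define j where "j = length (longest_common_prefix v l)"
  have "v \<noteq> []" "k \<le> h"
    using off v unfolding k_def tree_vertices_def by auto
  then have "1 \<le> k"
    unfolding k_def by (simp add: Suc_le_eq)
  have "\<not> prefix (v @ [i]) l" for i
    using off by (simp add: prefix_snoc_iff_nth)
  then have "(\<Sum>i<num_children d h v. potential (v @ [i])) =
      g j * (int (num_children d h v) * int (theta d (h - k)))"
    unfolding sum_potential_children j_def k_def by simp
  also have "\<dots> = g j * ((int d - 1) * int (theta d (h - k)))"
    using num_children_mult_theta \<open>v \<noteq> []\<close> \<open>k \<le> h\<close> unfolding k_def by simp
  finally have children: "(\<Sum>i<num_children d h v. potential (v @ [i])) =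
      g j * ((int d - 1) * int (theta d (h - k)))" .
  have parent: "potential (butlast v) = g j * int (theta d (Suc (Suc (h - k))))"
    using \<open>1 \<le> k\<close> \<open>k \<le> h\<close> length_longest_common_prefix_butlast[OF off]
    by (simp add: potential_def j_def k_def Suc_diff_le)
  have self: "potential v = g j * int (theta d (Suc (h - k)))"
    using \<open>k \<le> h\<close> by (simp add: potential_def j_def k_def Suc_diff_le)
  have "tree_laplacian d h potential v =
      g j * (int d * int (theta d (Suc (h - k))) - int (theta d (Suc (Suc (h - k))))
             - (int d - 1) * int (theta d (h - k)))"
    unfolding tree_laplacian_def children parent self using \<open>v \<noteq> []\<close>
    by (simp add: algebra_simps)
  then show ?thesis
    using theta_Suc_Suc[OF d, of "h - k"] by simp
qed

lemma nth_leaf_less_num_children: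
  assumes "prefix v l" "length v < h"
  shows "l ! length v < num_children d h v"
proof -
  have "prefix (v @ [l ! length v]) l"
    using assms l by (simp add: prefix_snoc_iff_nth)
  then show ?thesis
    using prefix_in_tree_vertices[OF _ l(1)] snoc_in_tree_vertices_iff assms(1) by blast
qed

lemma potential_on_path:
  "prefix v l \<Longrightarrow> potential v = g (length v) * int (theta d (Suc h - length v))"
  by (simp add: potential_def longest_common_prefix_prefix_eq)

lemma sum_potential_children_on_path:
  assumes "prefix v l" "length v < h"
  shows "(\<Sum>i<num_children d h v. potential (v @ [i])) =
    (g (Suc (length v)) + (int (num_children d h v) - 1) * g (length v)) * int (theta d (h - length v))"
proof -
  have "(\<Sum>i<num_children d h v.
          g (if prefix (v @ [i]) l then Suc (length v) else length (longest_common_prefix v l))) =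
      (\<Sum>i<num_children d h v. if i = l ! length v then g (Suc (length v)) else g (length v))"
    using assms l by (intro sum.cong) (auto simp: prefix_snoc_iff_nth longest_common_prefix_prefix_eq)
  also have "\<dots> = g (Suc (length v)) + (int (num_children d h v) - 1) * g (length v)"
    using nth_leaf_less_num_children[OF assms] by (rule sum_if_eq_lessThan)
  finally show ?thesis
    unfolding sum_potential_children by simp
qed

lemma tree_laplacian_potential_root: "tree_laplacian d h potential [] = 0"
proof -
  define A where "A = int (theta d (Suc h))"
  define C where "C = int (theta d h)"
  have self: "potential [] = g 0 * A"
    by (simp add: potential_on_path A_def)
  have children: "(\<Sum>i<num_children d h []. potential ([] @ [i])) = (g 1 + (int d - 1) * g 0) * C"
    using sum_potential_children_on_path[of "[]"] h by (simp add: num_children_def C_def)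
  have root_step: "int d * (A - C) * A * g 0 = N"
    using g_0 d theta_Suc_eq_add_power[OF d, of h] by (simp add: A_def C_def of_nat_diff algebra_simps)
  have first_step: "A * C * (g 1 - g 0) = N"
    using g_Suc[of 0] h by (simp add: A_def C_def)
  have "A * tree_laplacian d h potential [] = int d * (A - C) * A * g 0 - A * C * (g 1 - g 0)"
    unfolding tree_laplacian_def self children by (simp add: algebra_simps)
  also have "\<dots> = 0"
    using root_step first_step by simp
  finally show ?thesis
    using theta_pos[OF d, of "Suc h"] by (simp add: A_def)
qed

lemma tree_laplacian_potential_interior:
  assumes on: "prefix v l" and "v \<noteq> []" "length v < h"
  shows "tree_laplacian d h potential v = 0"
proof -
  define k where "k = length v"
  define A where "A = int (theta d (Suc (h - k)))"
  define B where "B = int (theta d (Suc (Suc (h - k))))"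
  define C where "C = int (theta d (h - k))"
  have "1 \<le> k" "k < h"
    using assms unfolding k_def by (auto simp: Suc_le_eq)
  have self: "potential v = g k * A"
    using potential_on_path[OF on] \<open>k < h\<close> by (simp add: A_def k_def Suc_diff_le)
  have "prefix (butlast v) l"
    using on prefixeq_butlast prefix_order.trans by blast
  then have parent: "potential (butlast v) = g (k - 1) * B"
    using potential_on_path \<open>1 \<le> k\<close> \<open>k < h\<close> by (simp add: B_def k_def Suc_diff_le)
  have children: "(\<Sum>i<num_children d h v. potential (v @ [i])) = (g (Suc k) + (int d - 2) * g k) * C"
    using sum_potential_children_on_path[OF on] assms d
    by (simp add: num_children_def of_nat_diff C_def k_def)
  have harmonic: "int d * A - B - (int d - 1) * C = 0"
    using theta_Suc_Suc[OF d, of "h - k"] by (simp add: A_def B_def C_def)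
  have step_in: "B * A * (g k - g (k - 1)) = N"
    using g_Suc[of "k - 1"] \<open>1 \<le> k\<close> \<open>k < h\<close> by (simp add: A_def B_def Suc_diff_le)
  have step_out: "A * C * (g (Suc k) - g k) = N"
    using g_Suc[of k] \<open>k < h\<close> by (simp add: A_def C_def)
  have "A * tree_laplacian d h potential v =
      g k * A * (int d * A - B - (int d - 1) * C) + B * A * (g k - g (k - 1)) - A * C * (g (Suc k) - g k)"
    unfolding tree_laplacian_def self parent children using \<open>v \<noteq> []\<close> by (simp add: algebra_simps)
  also have "\<dots> = 0"
    using harmonic step_in step_out by simp
  finally show ?thesis
    using theta_pos[OF d, of "Suc (h - k)"] by (simp add: A_def)
qed

lemma tree_laplacian_potential_leaf: "tree_laplacian d h potential l = N"
proof -
  have "l \<noteq> []" "Suc h - length l = 1" "Suc h - length (butlast l) = Suc (Suc 0)"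
    using l h by auto
  then have "potential l = g h" "potential (butlast l) = g (h - 1) * int d"
    using potential_on_path[of l] potential_on_path[of "butlast l"] l d
    by (simp_all add: prefixeq_butlast theta_1 theta_2)
  moreover have "int d * (g h - g (h - 1)) = N"
    using g_Suc[of "h - 1"] h d by (simp add: theta_1 theta_2)
  ultimately show ?thesis
    using \<open>l \<noteq> []\<close> l by (simp add: tree_laplacian_def num_children_def algebra_simps)
qed

lemma tree_laplacian_potential:
  assumes "v \<in> tree_vertices d h"
  shows "tree_laplacian d h potential v = (if v = l then N else 0)"
proof (cases "prefix v l")
  case True
  then consider "v = []" | "v \<noteq> []" "length v < h" | "v = l"
    using assms l prefix_length_le[OF True] prefix_length_prefix[of l l v]
    by (metis order_le_less prefix_order.antisym prefix_order.refl)
  then show ?thesis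
  proof cases
    case 1
    then show ?thesis
      using l h tree_laplacian_potential_root by auto
  next
    case 2
    then show ?thesis
      using True l tree_laplacian_potential_interior by auto
  next
    case 3
    then show ?thesis
      using tree_laplacian_potential_leaf by simp
  qed
next
  case False
  then show ?thesis
    using assms tree_laplacian_potential_off_path by auto
qed

lemma smult_basis_vec_in_tree_lattice: "(\<lambda>v. N * basis_vec l v) \<in> tree_lattice d h"
proof -
  have "N * basis_vec l v = (\<Sum>u\<in>tree_vertices d h. potential u * tree_Delta d h u v)" for v
  proof (cases "v \<in> tree_vertices d h")
    case True
    then show ?thesis
      by (simp add: sum_tree_Delta tree_laplacian_potential basis_vec_def)
  next
    case False
    then have "v \<noteq> l" "\<And>u. u \<in> tree_vertices d h \<Longrightarrow> tree_Delta d h u v = 0"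
      using l by (auto simp: tree_Delta_def tree_adj_def)
    then show ?thesis
      by (simp add: basis_vec_def)
  qed
  then show ?thesis
    unfolding tree_lattice_def by blast
qed

end

lemma smult_basis_vec_leaf_in_tree_lattice:
  assumes "d \<ge> 3" "h \<ge> 1" "l \<in> tree_vertices d h" "length l = h"
    and root_dvd: "d * (d - 1) ^ h * theta d (Suc h) dvd n"
    and edge_dvd: "\<And>m. 1 \<le> m \<Longrightarrow> m \<le> h \<Longrightarrow> theta d (Suc m) * theta d m dvd n"
  shows "(\<lambda>v. int n * basis_vec l v) \<in> tree_lattice d h"
proof -
  define g where "g j = int n div int (d * (d - 1) ^ h * theta d (Suc h))
      + (\<Sum>i<j. int n div int (theta d (Suc (h - i)) * theta d (h - i)))" for j
  interpret leaf_potential d h l "int n" g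
  proof
    show "int (d * (d - 1) ^ h * theta d (Suc h)) * g 0 = int n"
      using root_dvd by (simp add: g_def flip: of_nat_mult)
  next
    fix j
    assume "j < h"
    then have "theta d (Suc (h - j)) * theta d (h - j) dvd n"
      by (intro edge_dvd) auto
    then show "int (theta d (Suc (h - j)) * theta d (h - j)) * (g (Suc j) - g j) = int n"
      by (simp add: g_def flip: of_nat_mult)
  qed (use assms in auto)
  show ?thesis
    by (rule smult_basis_vec_in_tree_lattice)
qed

lemma theta_Suc_mult_theta_dvd_Lcm:
  assumes d: "d \<ge> 3" and "1 \<le> m" "m \<le> h"
  shows "theta d (Suc m) * theta d m dvd Lcm ({d * theta d (h + 1)} \<union> theta d ` {2..h})"
    (is "_ dvd ?L")
proof -
  have "theta d (Suc m) dvd ?L"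
  proof (cases "m = h")
    case True
    then have "theta d (Suc m) dvd d * theta d (h + 1)"
      by simp
    also have "\<dots> dvd ?L"
      by (simp add: dvd_Lcm)
    finally show ?thesis .
  next
    case False
    then show ?thesis
      using assms by (intro dvd_Lcm) auto
  qed
  moreover have "theta d m dvd ?L"
  proof (cases "m = 1")
    case True
    then show ?thesis
      using theta_1[OF d] by simp
  next
    case False
    then show ?thesis
      using assms by (intro dvd_Lcm) auto
  qed
  ultimately show ?thesis
    using coprime_theta_Suc[OF d] by (simp add: divides_mult)
qed

lemma Lcm_theta_nonzero:
  assumes d: "d \<ge> 3"
  shows "Lcm ({d * theta d (h + 1)} \<union> theta d ` {2..h}) \<noteq> 0"
proof -
  have "d * theta d (h + 1) \<noteq> 0"
    using d theta_pos[OF d, of "h + 1"] by simp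
  moreover have "theta d m \<noteq> 0" if "m \<in> {2..h}" for m
    using that theta_pos[OF d, of m] by simp
  ultimately have "0 \<notin> {d * theta d (h + 1)} \<union> theta d ` {2..h}"
    by (metis UnE imageE singletonD)
  then show ?thesis
    by (simp add: Lcm_0_iff_nat)
qed

theorem lemma7p3:
  fixes d h :: nat and l :: "nat list"
  assumes "d \<ge> 3" and "h \<ge> 1"
    and "l \<in> tree_vertices d h" and "length l = h"
  shows "G_order d h (basis_vec l) dvd
           (d - 1) ^ h * Lcm ({d * theta d (h + 1)} \<union> theta d ` {2..h})"
proof -
  define L where "L = Lcm ({d * theta d (h + 1)} \<union> theta d ` {2..h})"
  have "d * theta d (Suc h) dvd L"
    unfolding L_def by (simp add: dvd_Lcm)
  then have "d * (d - 1) ^ h * theta d (Suc h) dvd (d - 1) ^ h * L"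
    by (metis mult.commute mult.left_commute mult_dvd_mono dvd_refl)
  moreover have "theta d (Suc m) * theta d m dvd (d - 1) ^ h * L" if "1 \<le> m" "m \<le> h" for m
    using theta_Suc_mult_theta_dvd_Lcm[OF assms(1) that] unfolding L_def by (rule dvd_mult)
  ultimately have "(\<lambda>v. int ((d - 1) ^ h * L) * basis_vec l v) \<in> tree_lattice d h"
    using smult_basis_vec_leaf_in_tree_lattice assms by blast
  moreover have "L \<noteq> 0"
    unfolding L_def by (rule Lcm_theta_nonzero[OF assms(1)])
  then have "(d - 1) ^ h * L > 0"
    using assms(1) by simp
  ultimately show ?thesis
    unfolding L_def by (rule G_order_dvd[rotated])
qed

end
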